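(* Let $A$ be a ring and $|\cdot|:A\to R$ a generalized seminorm that has tiny balls. Then the ball neighborhood topology for $|\cdot|$ exists (there is a unique topology on $A$ compatible with addition in which, for every $x\in A$, the non-empty open balls $B(x,|a|)$, $a\in A$, $|a|>0$, form a fundamental system of neighborhoods of $x$), and it makes $A$ a topological ring.
   Context: A halo is a commutative unital semiring with a partial order compatible with $+$ and $\cdot$; an aura is a halo whose semiring is a semifield; positive means $0<1$. A generalized seminorm is a map $|\cdot|:A\to R$ into a positive totally ordered aura with $|0|=0,|1|=1$, $|a+b|\le|a|+|b|$, $|ab|\le|a||b|$. For $x,a\in A$ with $|a|>0$, the open ball is $B(x,|a|)=\{z\in A:|z-x|<|a|\}$. $|\cdot|$ has tiny balls if: (1) for all $a$ with $|a|>0$ there is $a'$ with $|a'|>0$ and $B(0,|a'|)+B(0,|a'|)\subset B(0,|a|)$; (2) for all $a$ with $|a|>0$ and all $x\in A$ there is $c$ with $|c|>0$ and $x\cdot B(0,|c|)\subset B(0,|a|)$; (3) for all $a$ with $|a|>0$ there is $a'$ with $|a'|>0$ and $B(0,|a'|)\cdot B(0,|a'|)\subset B(0,|a|)$; (4) for all $a$ with $|a|>0$ there is $a'$ with $|a'|>0$ and $-B(0,|a'|)\subset B(0,|a|)$. *)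

theory Defs
  imports "HOL-Analysis.Analysis"
begin

text \<open>The target R of a generalized seminorm is modelled as a type 'r carrying a
commutative unital semiring structure (comm_semiring_1, which includes 0 \<noteq> 1) and a
total order.\<close>

definition halo_compatible :: "'r::{comm_semiring_1,order} itself \<Rightarrow> bool" where
  "halo_compatible _ \<longleftrightarrow>
     (\<forall>x y z :: 'r. x \<le> y \<longrightarrow> x + z \<le> y + z) \<and>
     (\<forall>x y z :: 'r. x \<le> y \<longrightarrow> x * z \<le> y * z)"

definition semifield_axiom :: "'r::comm_semiring_1 itself \<Rightarrow> bool" where
  "semifield_axiom _ \<longleftrightarrow> (\<forall>x :: 'r. x \<noteq> 0 \<longrightarrow> (\<exists>y. x * y = 1))"

definition positive_totally_ordered_aura :: "'r::{comm_semiring_1,linorder} itself \<Rightarrow> bool" where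
  "positive_totally_ordered_aura T \<longleftrightarrow>
     halo_compatible T \<and> semifield_axiom T \<and> (0::'r) < 1"

definition gen_seminorm :: "('a::comm_ring_1 \<Rightarrow> 'r::{comm_semiring_1,linorder}) \<Rightarrow> bool" where
  "gen_seminorm nrm \<longleftrightarrow>
     positive_totally_ordered_aura TYPE('r) \<and>
     nrm 0 = 0 \<and> nrm 1 = 1 \<and>
     (\<forall>a b. nrm (a + b) \<le> nrm a + nrm b) \<and>
     (\<forall>a b. nrm (a * b) \<le> nrm a * nrm b)"

definition nball :: "('a::comm_ring_1 \<Rightarrow> 'r::{comm_semiring_1,linorder}) \<Rightarrow> 'a \<Rightarrow> 'a \<Rightarrow> 'a set" where
  "nball nrm x a = {z. nrm (z - x) < nrm a}"

definition has_tiny_balls :: "('a::comm_ring_1 \<Rightarrow> 'r::{comm_semiring_1,linorder}) \<Rightarrow> bool" where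
  "has_tiny_balls nrm \<longleftrightarrow>
     (\<forall>a. 0 < nrm a \<longrightarrow> (\<exists>a'. 0 < nrm a' \<and>
         {u + v | u v. u \<in> nball nrm 0 a' \<and> v \<in> nball nrm 0 a'} \<subseteq> nball nrm 0 a)) \<and>
     (\<forall>a x. 0 < nrm a \<longrightarrow> (\<exists>c. 0 < nrm c \<and>
         (\<lambda>z. x * z) ` nball nrm 0 c \<subseteq> nball nrm 0 a)) \<and>
     (\<forall>a. 0 < nrm a \<longrightarrow> (\<exists>a'. 0 < nrm a' \<and>
         {u * v | u v. u \<in> nball nrm 0 a' \<and> v \<in> nball nrm 0 a'} \<subseteq> nball nrm 0 a)) \<and>
     (\<forall>a. 0 < nrm a \<longrightarrow> (\<exists>a'. 0 < nrm a' \<and>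
         uminus ` nball nrm 0 a' \<subseteq> nball nrm 0 a))"

definition nbhd_in :: "'a topology \<Rightarrow> 'a \<Rightarrow> 'a set \<Rightarrow> bool" where
  "nbhd_in T x N \<longleftrightarrow> (\<exists>U. openin T U \<and> x \<in> U \<and> U \<subseteq> N)"

definition is_ball_nbhd_topology ::
  "('a::comm_ring_1 \<Rightarrow> 'r::{comm_semiring_1,linorder}) \<Rightarrow> 'a topology \<Rightarrow> bool" where
  "is_ball_nbhd_topology nrm T \<longleftrightarrow>
     topspace T = UNIV \<and>
     continuous_map (prod_topology T T) T (\<lambda>(x, y). x + y) \<and>
     (\<forall>x. (\<forall>a. 0 < nrm a \<longrightarrow> nbhd_in T x (nball nrm x a)) \<and>
          (\<forall>N. nbhd_in T x N \<longrightarrow> (\<exists>a. 0 < nrm a \<and> nball nrm x a \<subseteq> N)))"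

definition topological_ring_top :: "'a::comm_ring_1 topology \<Rightarrow> bool" where
  "topological_ring_top T \<longleftrightarrow>
     topspace T = UNIV \<and>
     continuous_map (prod_topology T T) T (\<lambda>(x, y). x + y) \<and>
     continuous_map T T uminus \<and>
     continuous_map (prod_topology T T) T (\<lambda>(x, y). x * y)"

end

theory Submission
  imports Defs
begin

text \<open>A set is open iff it contains a ball around each of its points; any topology in which
balls form fundamental systems of neighbourhoods has exactly these open sets, hence uniqueness.
Condition (1) makes every ball a neighbourhood of its centre: if B(y,|b|) lies in B(x,|a|) and
B(0,|b'|) + B(0,|b'|) lies in B(0,|b|), then B(z,|b'|) lies in B(x,|a|) for every z in B(y,|b'|),
so the points of B(x,|a|) having a ball inside B(x,|a|) form an open set.
Continuity of multiplication rests on vw - xy = x(w - y) + y(v - x) + (v - x)(w - y) and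
conditions (1)-(3); that of negation on condition (4).\<close>

definition ball_open :: "('a::comm_ring_1 \<Rightarrow> 'r::{comm_semiring_1,linorder}) \<Rightarrow> 'a set \<Rightarrow> bool" where
  "ball_open nrm U \<longleftrightarrow> (\<forall>x\<in>U. \<exists>a. 0 < nrm a \<and> nball nrm x a \<subseteq> U)"

definition ball_topology :: "('a::comm_ring_1 \<Rightarrow> 'r::{comm_semiring_1,linorder}) \<Rightarrow> 'a topology" where
  "ball_topology nrm = topology (ball_open nrm)"

context
  fixes nrm :: "'a::comm_ring_1 \<Rightarrow> 'r::{comm_semiring_1,linorder}"
begin

lemma mem_nball_iff_diff: "z \<in> nball nrm x a \<longleftrightarrow> z - x \<in> nball nrm 0 a"
  by (simp add: nball_def)

lemma nball_mono: "nrm a \<le> nrm b \<Longrightarrow> nball nrm x a \<subseteq> nball nrm x b"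
  by (auto simp: nball_def)

lemma centre_in_nball: "nrm 0 = 0 \<Longrightarrow> 0 < nrm a \<Longrightarrow> x \<in> nball nrm x a"
  by (simp add: nball_def)

lemma exists_smaller_norm:
  assumes "0 < nrm a" "0 < nrm b"
  shows "\<exists>c. 0 < nrm c \<and> nrm c \<le> nrm a \<and> nrm c \<le> nrm b"
  using assms by (cases "nrm a \<le> nrm b") auto

lemma istopology_ball_open: "istopology (ball_open nrm)"
  unfolding istopology_def
proof (intro conjI allI impI)
  fix S T assume "ball_open nrm S" "ball_open nrm T"
  show "ball_open nrm (S \<inter> T)"
    unfolding ball_open_def
  proof
    fix x assume "x \<in> S \<inter> T"
    then obtain a b where a: "0 < nrm a" "nball nrm x a \<subseteq> S"
      and b: "0 < nrm b" "nball nrm x b \<subseteq> T"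
      using \<open>ball_open nrm S\<close> \<open>ball_open nrm T\<close> unfolding ball_open_def by blast
    then obtain c where "0 < nrm c" "nrm c \<le> nrm a" "nrm c \<le> nrm b"
      using exists_smaller_norm by blast
    with a b show "\<exists>c. 0 < nrm c \<and> nball nrm x c \<subseteq> S \<inter> T"
      using nball_mono by blast
  qed
next
  fix K assume "\<forall>S\<in>K. ball_open nrm S"
  then show "ball_open nrm (\<Union>K)"
    unfolding ball_open_def by (meson Union_iff Union_upper subset_trans)
qed

lemma openin_ball_topology [simp]: "openin (ball_topology nrm) = ball_open nrm"
  by (simp add: ball_topology_def istopology_ball_open)

lemma topspace_ball_topology:
  assumes "0 < nrm 1"
  shows "topspace (ball_topology nrm) = UNIV"
proof -
  have "ball_open nrm UNIV"
    using assms unfolding ball_open_def by blast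
  then show ?thesis
    by (simp add: topspace_def Sup_upper top.extremum_uniqueI)
qed

lemma has_tiny_balls_addD:
  assumes "has_tiny_balls nrm" "0 < nrm a"
  shows "\<exists>b. 0 < nrm b \<and>
    (\<forall>u v. u \<in> nball nrm 0 b \<longrightarrow> v \<in> nball nrm 0 b \<longrightarrow> u + v \<in> nball nrm 0 a)"
proof -
  obtain b where "0 < nrm b"
    "{u + v | u v. u \<in> nball nrm 0 b \<and> v \<in> nball nrm 0 b} \<subseteq> nball nrm 0 a"
    using assms(1)[unfolded has_tiny_balls_def, THEN conjunct1] assms(2) by blast
  then show ?thesis
    by blast
qed

lemma has_tiny_balls_scaleD:
  assumes "has_tiny_balls nrm" "0 < nrm a"
  shows "\<exists>c. 0 < nrm c \<and> (\<forall>u. u \<in> nball nrm 0 c \<longrightarrow> x * u \<in> nball nrm 0 a)"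
proof -
  obtain c where "0 < nrm c" "(\<lambda>z. x * z) ` nball nrm 0 c \<subseteq> nball nrm 0 a"
    using assms(1)[unfolded has_tiny_balls_def, THEN conjunct2, THEN conjunct1] assms(2) by blast
  then show ?thesis
    by blast
qed

lemma has_tiny_balls_multD:
  assumes "has_tiny_balls nrm" "0 < nrm a"
  shows "\<exists>b. 0 < nrm b \<and>
    (\<forall>u v. u \<in> nball nrm 0 b \<longrightarrow> v \<in> nball nrm 0 b \<longrightarrow> u * v \<in> nball nrm 0 a)"
proof -
  obtain b where "0 < nrm b"
    "{u * v | u v. u \<in> nball nrm 0 b \<and> v \<in> nball nrm 0 b} \<subseteq> nball nrm 0 a"
    using assms(1)[unfolded has_tiny_balls_def, THEN conjunct2, THEN conjunct2, THEN conjunct1]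
      assms(2)
    by blast
  then show ?thesis
    by blast
qed

lemma has_tiny_balls_uminusD:
  assumes "has_tiny_balls nrm" "0 < nrm a"
  shows "\<exists>b. 0 < nrm b \<and> (\<forall>u. u \<in> nball nrm 0 b \<longrightarrow> - u \<in> nball nrm 0 a)"
proof -
  obtain b where "0 < nrm b" "uminus ` nball nrm 0 b \<subseteq> nball nrm 0 a"
    using assms(1)[unfolded has_tiny_balls_def, THEN conjunct2, THEN conjunct2, THEN conjunct2]
      assms(2)
    by blast
  then show ?thesis
    by blast
qed

lemma has_tiny_balls_add3D:
  assumes tiny: "has_tiny_balls nrm" and zero: "nrm 0 = 0" and a: "0 < nrm a"
  shows "\<exists>b. 0 < nrm b \<and> (\<forall>u v w. u \<in> nball nrm 0 b \<longrightarrow> v \<in> nball nrm 0 b \<longrightarrow>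
    w \<in> nball nrm 0 b \<longrightarrow> u + v + w \<in> nball nrm 0 a)"
proof -
  obtain a1 where a1: "0 < nrm a1"
    "\<And>u v. u \<in> nball nrm 0 a1 \<Longrightarrow> v \<in> nball nrm 0 a1 \<Longrightarrow> u + v \<in> nball nrm 0 a"
    using has_tiny_balls_addD[OF tiny a] by blast
  obtain b where b: "0 < nrm b"
    "\<And>u v. u \<in> nball nrm 0 b \<Longrightarrow> v \<in> nball nrm 0 b \<Longrightarrow> u + v \<in> nball nrm 0 a1"
    using has_tiny_balls_addD[OF tiny a1(1)] by blast
  have "w \<in> nball nrm 0 a1" if "w \<in> nball nrm 0 b" for w
    using b(2)[OF that centre_in_nball[OF zero b(1)]] by simp
  with a1 b show ?thesis by blast
qed

lemma nbhd_in_ball_topology_nball: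
  assumes tiny: "has_tiny_balls nrm" and zero: "nrm 0 = 0" and a: "0 < nrm a"
  shows "nbhd_in (ball_topology nrm) x (nball nrm x a)"
proof -
  define V where "V = {y. \<exists>b. 0 < nrm b \<and> nball nrm y b \<subseteq> nball nrm x a}"
  have "ball_open nrm V"
    unfolding ball_open_def
  proof
    fix y assume "y \<in> V"
    then obtain b where b: "0 < nrm b" "nball nrm y b \<subseteq> nball nrm x a"
      unfolding V_def by blast
    obtain b' where b': "0 < nrm b'"
      "\<And>u v. u \<in> nball nrm 0 b' \<Longrightarrow> v \<in> nball nrm 0 b' \<Longrightarrow> u + v \<in> nball nrm 0 b"
      using has_tiny_balls_addD[OF tiny b(1)] by blast
    have "nball nrm z b' \<subseteq> nball nrm x a" if z: "z \<in> nball nrm y b'" for z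
    proof
      fix w assume w: "w \<in> nball nrm z b'"
      have "(w - z) + (z - y) \<in> nball nrm 0 b"
        using b'(2) w z mem_nball_iff_diff by metis
      then show "w \<in> nball nrm x a"
        using b(2) mem_nball_iff_diff[of w y b] by auto
    qed
    with b' show "\<exists>b. 0 < nrm b \<and> nball nrm y b \<subseteq> V"
      unfolding V_def by blast
  qed
  moreover have "x \<in> V" "V \<subseteq> nball nrm x a"
    using a centre_in_nball[OF zero] unfolding V_def by blast+
  ultimately show ?thesis
    unfolding nbhd_in_def openin_ball_topology by blast
qed

lemma ball_nbhd_topology_eq_ball_topology:
  assumes "is_ball_nbhd_topology nrm T"
  shows "T = ball_topology nrm"
proof -
  have nbhd: "\<And>x a. 0 < nrm a \<Longrightarrow> nbhd_in T x (nball nrm x a)"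
    and fundamental: "\<And>x N. nbhd_in T x N \<Longrightarrow> \<exists>a. 0 < nrm a \<and> nball nrm x a \<subseteq> N"
    using assms unfolding is_ball_nbhd_topology_def by blast+
  have "openin T U \<longleftrightarrow> ball_open nrm U" for U
  proof
    assume "openin T U"
    then have "nbhd_in T x U" if "x \<in> U" for x
      using that unfolding nbhd_in_def by blast
    then show "ball_open nrm U"
      unfolding ball_open_def using fundamental by blast
  next
    assume U: "ball_open nrm U"
    have "\<exists>V. openin T V \<and> x \<in> V \<and> V \<subseteq> U" if "x \<in> U" for x
    proof -
      obtain a where a: "0 < nrm a" "nball nrm x a \<subseteq> U"
        using U \<open>x \<in> U\<close> unfolding ball_open_def by blast
      then obtain V where "openin T V" "x \<in> V" "V \<subseteq> nball nrm x a"
        using nbhd unfolding nbhd_in_def by blast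
      with a show ?thesis
        by blast
    qed
    then show "openin T U"
      using openin_subopen by blast
  qed
  then show ?thesis
    unfolding topology_eq by simp
qed

lemma continuous_map_ball_topologyI:
  assumes one: "0 < nrm 1"
    and cont: "\<And>x a. 0 < nrm a \<Longrightarrow>
      \<exists>b. 0 < nrm b \<and> (\<forall>v\<in>nball nrm x b. f v \<in> nball nrm (f x) a)"
  shows "continuous_map (ball_topology nrm) (ball_topology nrm) f"
proof -
  have "ball_open nrm (f -` U)" if U: "ball_open nrm U" for U
    unfolding ball_open_def
  proof
    fix x assume "x \<in> f -` U"
    then obtain a where a: "0 < nrm a" "nball nrm (f x) a \<subseteq> U"
      using U unfolding ball_open_def by blast
    then obtain b where "0 < nrm b" "\<forall>v\<in>nball nrm x b. f v \<in> nball nrm (f x) a"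
      using cont by blast
    with a show "\<exists>b. 0 < nrm b \<and> nball nrm x b \<subseteq> f -` U"
      by blast
  qed
  then show ?thesis
    by (simp add: continuous_map topspace_ball_topology[OF one] vimage_def)
qed

lemma continuous_map_ball_topology_prodI:
  assumes tiny: "has_tiny_balls nrm" and zero: "nrm 0 = 0" and one: "0 < nrm 1"
    and cont: "\<And>x y a. 0 < nrm a \<Longrightarrow> \<exists>b. 0 < nrm b \<and>
      (\<forall>v\<in>nball nrm x b. \<forall>w\<in>nball nrm y b. f v w \<in> nball nrm (f x y) a)"
  shows "continuous_map (prod_topology (ball_topology nrm) (ball_topology nrm))
    (ball_topology nrm) (\<lambda>(x, y). f x y)"
proof -
  have "openin (prod_topology (ball_topology nrm) (ball_topology nrm)) ((\<lambda>(x, y). f x y) -` U)"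
    if U: "ball_open nrm U" for U
    unfolding openin_prod_topology_alt
  proof (intro allI impI)
    fix x y assume "(x, y) \<in> (\<lambda>(x, y). f x y) -` U"
    then obtain a where a: "0 < nrm a" "nball nrm (f x y) a \<subseteq> U"
      using U unfolding ball_open_def by auto
    then obtain b where b: "0 < nrm b"
      "\<forall>v\<in>nball nrm x b. \<forall>w\<in>nball nrm y b. f v w \<in> nball nrm (f x y) a"
      using cont by blast
    obtain V where V: "ball_open nrm V" "x \<in> V" "V \<subseteq> nball nrm x b"
      using nbhd_in_ball_topology_nball[OF tiny zero b(1)]
      unfolding nbhd_in_def openin_ball_topology by blast
    obtain W where W: "ball_open nrm W" "y \<in> W" "W \<subseteq> nball nrm y b"
      using nbhd_in_ball_topology_nball[OF tiny zero b(1)]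
      unfolding nbhd_in_def openin_ball_topology by blast
    have "V \<times> W \<subseteq> (\<lambda>(x, y). f x y) -` U"
    proof
      fix z assume "z \<in> V \<times> W"
      then obtain v w where z: "z = (v, w)" "v \<in> V" "w \<in> W"
        by blast
      then have "f v w \<in> nball nrm (f x y) a"
        using b(2) V(3) W(3) by blast
      with a(2) z(1) show "z \<in> (\<lambda>(x, y). f x y) -` U"
        by auto
    qed
    with V W show "\<exists>V W. openin (ball_topology nrm) V \<and> openin (ball_topology nrm) W \<and>
        x \<in> V \<and> y \<in> W \<and> V \<times> W \<subseteq> (\<lambda>(x, y). f x y) -` U"
      unfolding openin_ball_topology by blast
  qed
  then show ?thesis
    by (simp add: continuous_map topspace_ball_topology[OF one] topspace_prod_topology
        vimage_def)
qed

lemma add_nball_nball: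
  assumes "has_tiny_balls nrm" "0 < nrm a"
  shows "\<exists>b. 0 < nrm b \<and>
    (\<forall>v\<in>nball nrm x b. \<forall>w\<in>nball nrm y b. v + w \<in> nball nrm (x + y) a)"
proof -
  obtain b where b: "0 < nrm b"
    "\<And>u v. u \<in> nball nrm 0 b \<Longrightarrow> v \<in> nball nrm 0 b \<Longrightarrow> u + v \<in> nball nrm 0 a"
    using has_tiny_balls_addD[OF assms] by blast
  have "(v + w) - (x + y) = (v - x) + (w - y)" for v w
    by (simp add: algebra_simps)
  with b show ?thesis
    by (metis mem_nball_iff_diff)
qed

lemma uminus_nball:
  assumes "has_tiny_balls nrm" "0 < nrm a"
  shows "\<exists>b. 0 < nrm b \<and> (\<forall>v\<in>nball nrm x b. - v \<in> nball nrm (- x) a)"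
proof -
  obtain b where b: "0 < nrm b" "\<And>u. u \<in> nball nrm 0 b \<Longrightarrow> - u \<in> nball nrm 0 a"
    using has_tiny_balls_uminusD[OF assms] by blast
  have "- v - - x = - (v - x)" for v
    by simp
  with b show ?thesis
    by (metis mem_nball_iff_diff)
qed

lemma mult_nball_nball:
  assumes tiny: "has_tiny_balls nrm" and zero: "nrm 0 = 0" and a: "0 < nrm a"
  shows "\<exists>e. 0 < nrm e \<and>
    (\<forall>v\<in>nball nrm x e. \<forall>w\<in>nball nrm y e. v * w \<in> nball nrm (x * y) a)"
proof -
  obtain b where b: "0 < nrm b" "\<And>u v w. u \<in> nball nrm 0 b \<Longrightarrow> v \<in> nball nrm 0 b \<Longrightarrow>
      w \<in> nball nrm 0 b \<Longrightarrow> u + v + w \<in> nball nrm 0 a"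
    using has_tiny_balls_add3D[OF tiny zero a] by blast
  obtain cx where cx: "0 < nrm cx" "\<And>u. u \<in> nball nrm 0 cx \<Longrightarrow> x * u \<in> nball nrm 0 b"
    using has_tiny_balls_scaleD[OF tiny b(1)] by blast
  obtain cy where cy: "0 < nrm cy" "\<And>u. u \<in> nball nrm 0 cy \<Longrightarrow> y * u \<in> nball nrm 0 b"
    using has_tiny_balls_scaleD[OF tiny b(1)] by blast
  obtain d where d: "0 < nrm d"
    "\<And>u v. u \<in> nball nrm 0 d \<Longrightarrow> v \<in> nball nrm 0 d \<Longrightarrow> u * v \<in> nball nrm 0 b"
    using has_tiny_balls_multD[OF tiny b(1)] by blast
  obtain c where c: "0 < nrm c" "nrm c \<le> nrm cx" "nrm c \<le> nrm cy"
    using exists_smaller_norm[OF cx(1) cy(1)] by blast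
  obtain e where e: "0 < nrm e" "nrm e \<le> nrm c" "nrm e \<le> nrm d"
    using exists_smaller_norm[OF c(1) d(1)] by blast
  have "v * w \<in> nball nrm (x * y) a" if "v \<in> nball nrm x e" "w \<in> nball nrm y e" for v w
  proof -
    have p: "v - x \<in> nball nrm 0 e" and q: "w - y \<in> nball nrm 0 e"
      using that mem_nball_iff_diff by blast+
    have "x * (w - y) \<in> nball nrm 0 b" "y * (v - x) \<in> nball nrm 0 b"
      using cx(2) cy(2) nball_mono c e p q by (meson order_trans subsetD)+
    moreover have "(v - x) * (w - y) \<in> nball nrm 0 b"
      using d(2) nball_mono e p q by blast
    moreover have "v * w - x * y = x * (w - y) + y * (v - x) + (v - x) * (w - y)"
      by (simp add: algebra_simps)
    ultimately show ?thesis
      using b(2) mem_nball_iff_diff by metis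
  qed
  with e show ?thesis
    by blast
qed

lemma nbhd_in_ball_topology_imp_nball_subset:
  assumes "nbhd_in (ball_topology nrm) x N"
  shows "\<exists>a. 0 < nrm a \<and> nball nrm x a \<subseteq> N"
proof -
  obtain U where "ball_open nrm U" "x \<in> U" "U \<subseteq> N"
    using assms unfolding nbhd_in_def openin_ball_topology by blast
  then show ?thesis
    unfolding ball_open_def by blast
qed

lemma is_ball_nbhd_topology_ball_topology:
  assumes tiny: "has_tiny_balls nrm" and zero: "nrm 0 = 0" and one: "0 < nrm 1"
  shows "is_ball_nbhd_topology nrm (ball_topology nrm)"
  unfolding is_ball_nbhd_topology_def
  using topspace_ball_topology[OF one] nbhd_in_ball_topology_nball[OF tiny zero]
    nbhd_in_ball_topology_imp_nball_subset
    continuous_map_ball_topology_prodI[OF tiny zero one add_nball_nball[OF tiny]]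
  by blast

lemma topological_ring_top_ball_topology:
  assumes tiny: "has_tiny_balls nrm" and zero: "nrm 0 = 0" and one: "0 < nrm 1"
  shows "topological_ring_top (ball_topology nrm)"
  unfolding topological_ring_top_def
  using topspace_ball_topology[OF one]
    continuous_map_ball_topology_prodI[OF tiny zero one add_nball_nball[OF tiny]]
    continuous_map_ball_topologyI[OF one uminus_nball[OF tiny]]
    continuous_map_ball_topology_prodI[OF tiny zero one mult_nball_nball[OF tiny zero]]
  by blast

end

theorem proposition4p5:
  fixes nrm :: "'a::comm_ring_1 \<Rightarrow> 'r::{comm_semiring_1,linorder}"
  assumes "gen_seminorm nrm"
    and "has_tiny_balls nrm"
  shows "(\<exists>!T. is_ball_nbhd_topology nrm T) \<and>
         (\<forall>T. is_ball_nbhd_topology nrm T \<longrightarrow> topological_ring_top T)"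
proof -
  have zero: "nrm 0 = 0" and one: "0 < nrm 1"
    using assms(1) unfolding gen_seminorm_def positive_totally_ordered_aura_def by auto
  show ?thesis
    using is_ball_nbhd_topology_ball_topology[OF assms(2) zero one]
      topological_ring_top_ball_topology[OF assms(2) zero one]
      ball_nbhd_topology_eq_ball_topology
    by metis
qed

end
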